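(* Let $\mathcal T$ denote the set of Smirnov trees and, for $T\in\mathcal T$, let $a(T)$ be the label of its principal node $\alpha(T)$. Consider the set $$\mathcal X=\{(T,S,b)\in \mathcal T\times(\mathcal T\cup\{D,U\})\times\mathbb N:\ a(T)\neq b\},$$ where $D$ and $U$ are two formal symbols. Then the map $\Phi$ (defined in the context) is a well-defined bijection from $\mathcal X$ onto the set of Smirnov trees with at least $2$ nodes; it is weight-preserving, i.e. $w(\Phi(T,S,b))=w(T,S,b)$ for all $(T,S,b)\in\mathcal X$; and the principal node of $\Phi(T,S,b)$ has label $b$.
   Context: Trees are labeled rooted binary trees (each child is either a left or a right child, each node has at most one left and one right child) with labels in the positive integers $\mathbb N=\{1,2,\dots\}$, and have at least one node. Such a tree is a Smirnov tree if: whenever a left child has the same label $i$ as its parent, the parent also has a right child with label $<i$; and whenever a right child has the same label $i$ as its parent, the parent also has a left child with label $>i$. Let $\mathcal T$ be the set of Smirnov trees and $\mathcal T^c$ those whose root has label $c$. Principal path $P(T)$: start at the root; if the current vertex has no right child, stop; if the current vertex has a left child with the same label, move to that left child; otherwise move to the right child. The last vertex of $P(T)$ is the principal node $\alpha(T)$, with label $a(T)$; $M(T)$ and $m(T)$ are the maximum and minimum labels on $P(T)$. Weights: $\rho,\bar\rho,\lambda,\bar\lambda$ are commuting indeterminates and $x_1,x_2,\dots$ commuting variables. An edge from a parent with label $a$ to its right child with label $b$ has weight $\bar\rho$ if $a\le b$ and $\rho$ if $a>b$. An edge between a left child with label $a$ and its parent with label $b$ has weight $\bar\lambda$ if $a\le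 b$ and $\lambda$ if $a>b$. A node with label $a$ has weight $x_a$. The weight $w(T)$ of a tree is the product of the weights of all its edges and nodes. Weight of a triple $(T,S,b)\in\mathcal X$, with $a=a(T)$: $w(T,S,b)$ equals $\bar\rho\,w(T)x_b$ if $a<b,S=D$; $\rho\,w(T)x_b$ if $a>b,S=D$; $\bar\lambda\,w(T)x_b$ if $a<b,S=U$; $\lambda\,w(T)x_b$ if $a>b,S=U$; $\bar\lambda\bar\rho\,w(T)w(S)x_b$ if $a<b,S\in\mathcal T$; $\lambda\rho\,w(T)w(S)x_b$ if $a>b,S\in\mathcal T$. Definition of $\Phi(T,S,b)$. Write $\alpha=\alpha(T)$, $a=a(T)$, $P=P(T)$, $M=M(T)$, $m=m(T)$; if $S\in\mathcal T$ let $c$ be the label of its root. If $a<b$ (resp. $a>b$), let $\delta$ be the last vertex on $P$ with label $\ge b$ (resp. $\le b$) and $d$ its label (undefined if no such vertex exists). Note $\alpha$ has no right child. (1) If $S=D$, or $S\in\mathcal T^c$ with $a,c<b$, or $S\in\mathcal T^c$ with $a,c>b$: add to $\alpha$ a right child $\beta$ with label $b$; if $S=D$, $\beta$ has no children; if $S\in\mathcal T$, $\beta$ has $S$ as its left subtree (and no right child). (2) If $S=U$ and $a<b$, $M<b$; or $S=U$ and $a>b$, $m>b$; or $S\in\mathcal T^c$ and $a<b$, $M<b\le c$; or $S\in\mathcal T^c$ and $a>b$, $m>b\ge c$: add a new root $\beta$ with label $b$ whose left subtree is $T$ (and no right child); if $S\in\mathcal T$, additionally make $S$ the right subtree of $\alpha$.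 (3) If $S=U$, $a<b\le M$, $d>b$; or $S=U$, $a>b\ge m$, $d<b$; or $S\in\mathcal T^c$, $a<b$, $b\le c$, $b\le M$, $d>b$; or $S\in\mathcal T^c$, $a>b$, $b\ge c$, $b\ge m$, $d<b$: replace the right subtree of $\delta$ by a new node $\beta$ with label $b$, which has no right child and whose left subtree is the former right subtree of $\delta$; if $S\in\mathcal T$, additionally make $S$ the right subtree of $\alpha$. (4) If $S=U$, $a<b\le M$, $d=b$; or $S\in\mathcal T^c$, $a<b$, $b\le c$, $b\le M$, $d=b$: replace the left subtree of $\delta$ by a new node $\beta$ with label $b$, which has no right child and whose left subtree is the former left subtree of $\delta$ (empty if $\delta$ had none); if $S\in\mathcal T$, additionally make $S$ the right subtree of $\alpha$. (5) If $S=U$, $a>b\ge m$, $d=b$; or $S\in\mathcal T^c$, $a>b$, $b\ge c$, $b\ge m$, $d=b$: make the former right subtree of $\delta$ its new left subtree, and make its new right child a new node $\beta$ with label $b$, which has no right child and whose left subtree is the former left subtree of $\delta$; if $S\in\mathcal T$, additionally make $S$ the right subtree of $\alpha$. *)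

theory Defs
  imports Main "HOL-Library.Multiset"
begin

text \<open>Node l c r : left subtree l, label c, right subtree r. Leaf = empty tree.\<close>
datatype tree = Leaf | Node tree nat tree

datatype dir = L | R

fun lab :: "tree \<Rightarrow> nat option" where
  "lab Leaf = None"
| "lab (Node l c r) = Some c"

fun rootlab :: "tree \<Rightarrow> nat" where
  "rootlab Leaf = 0"
| "rootlab (Node l c r) = c"

fun nnodes :: "tree \<Rightarrow> nat" where
  "nnodes Leaf = 0"
| "nnodes (Node l c r) = Suc (nnodes l + nnodes r)"

fun labels_pos :: "tree \<Rightarrow> bool" where
  "labels_pos Leaf = True"
| "labels_pos (Node l c r) = (c \<ge> 1 \<and> labels_pos l \<and> labels_pos r)"

fun smir_local :: "tree \<Rightarrow> bool" where
  "smir_local Leaf = True"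
| "smir_local (Node l c r) =
     ((lab l = Some c \<longrightarrow> (\<exists>e. lab r = Some e \<and> e < c)) \<and>
      (lab r = Some c \<longrightarrow> (\<exists>e. lab l = Some e \<and> e > c)) \<and>
      smir_local l \<and> smir_local r)"

definition smirnov :: "tree \<Rightarrow> bool" where
  "smirnov t \<longleftrightarrow> t \<noteq> Leaf \<and> labels_pos t \<and> smir_local t"

fun sub :: "tree \<Rightarrow> dir list \<Rightarrow> tree" where
  "sub t [] = t"
| "sub Leaf (d # p) = Leaf"
| "sub (Node l c r) (L # p) = sub l p"
| "sub (Node l c r) (R # p) = sub r p"

fun modat :: "(tree \<Rightarrow> tree) \<Rightarrow> dir list \<Rightarrow> tree \<Rightarrow> tree" where
  "modat f [] t = f t"
| "modat f (d # p) Leaf = Leaf"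
| "modat f (L # p) (Node l c r) = Node (modat f p l) c r"
| "modat f (R # p) (Node l c r) = Node l c (modat f p r)"

fun ppath :: "tree \<Rightarrow> dir list list" where
  "ppath Leaf = []"
| "ppath (Node l c r) =
     [] # (if r = Leaf then []
           else if lab l = Some c then map (\<lambda>p. L # p) (ppath l)
           else map (\<lambda>p. R # p) (ppath r))"

definition alpha_pos :: "tree \<Rightarrow> dir list" where
  "alpha_pos t = last (ppath t)"

definition principal_label :: "tree \<Rightarrow> nat" where
  "principal_label t = rootlab (sub t (alpha_pos t))"

definition path_labels :: "tree \<Rightarrow> nat list" where
  "path_labels t = map (\<lambda>p. rootlab (sub t p)) (ppath t)"

definition pmax :: "tree \<Rightarrow> nat" where
  "pmax t = Max (set (path_labels t))"

definition pmin :: "tree \<Rightarrow> nat" where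
  "pmin t = Min (set (path_labels t))"

section \<open>Weights (monomials in commuting indeterminates, as multisets)\<close>

datatype var = Rho | RhoBar | Lam | LamBar | X nat

fun wt :: "tree \<Rightarrow> var multiset" where
  "wt Leaf = {#}"
| "wt (Node l c r) = {#X c#} + wt l + wt r
     + (case l of Leaf \<Rightarrow> {#} | Node _ a _ \<Rightarrow> {# if a \<le> c then LamBar else Lam #})
     + (case r of Leaf \<Rightarrow> {#} | Node _ b _ \<Rightarrow> {# if c \<le> b then RhoBar else Rho #})"

datatype second = D | U | Tr tree

definition Xset :: "(tree \<times> second \<times> nat) set" where
  "Xset = {(T, S, b). smirnov T \<and> (\<forall>s. S = Tr s \<longrightarrow> smirnov s) \<and> b \<ge> 1
                      \<and> principal_label T \<noteq> b}"

fun wtriple :: "tree \<times> second \<times> nat \<Rightarrow> var multiset" where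
  "wtriple (T, D, b) = (if principal_label T < b then {#RhoBar#} else {#Rho#}) + wt T + {#X b#}"
| "wtriple (T, U, b) = (if principal_label T < b then {#LamBar#} else {#Lam#}) + wt T + {#X b#}"
| "wtriple (T, Tr s, b) = (if principal_label T < b then {#LamBar, RhoBar#} else {#Lam, Rho#})
      + wt T + wt s + {#X b#}"

text \<open>Phi returns None when none of the cases (1)-(5) applies (or delta is undefined
  where needed); well-definedness on Xset is part of the theorem.\<close>
definition Phi :: "tree \<Rightarrow> second \<Rightarrow> nat \<Rightarrow> tree option" where
  "Phi T S b = (let
      P = ppath T; apos = alpha_pos T; a = principal_label T;
      M = pmax T; m = pmin T;
      isU = (S = U); isT = (\<exists>s. S = Tr s);
      s = (case S of Tr s \<Rightarrow> s | _ \<Rightarrow> Leaf);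
      c = rootlab s;
      T' = modat (\<lambda>t. case t of Leaf \<Rightarrow> Leaf | Node l x r \<Rightarrow> Node l x s) apos T;
      cands = filter (\<lambda>p. if a < b then rootlab (sub T p) \<ge> b else rootlab (sub T p) \<le> b) P;
      hasd = (cands \<noteq> []);
      dpos = last cands;
      d = rootlab (sub T dpos)
    in
      if S = D \<or> (isT \<and> a < b \<and> c < b) \<or> (isT \<and> a > b \<and> c > b) then
        Some (modat (\<lambda>t. case t of Leaf \<Rightarrow> Leaf | Node l x r \<Rightarrow> Node l x (Node s b Leaf)) apos T)
      else if (isU \<and> a < b \<and> M < b) \<or> (isU \<and> a > b \<and> m > b)
           \<or> (isT \<and> a < b \<and> M < b \<and> b \<le> c) \<or> (isT \<and> a > b \<and> m > b \<and> b \<ge> c) then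
        Some (Node T' b Leaf)
      else if hasd \<and> ((isU \<and> a < b \<and> b \<le> M \<and> d > b) \<or> (isU \<and> a > b \<and> b \<ge> m \<and> d < b)
           \<or> (isT \<and> a < b \<and> b \<le> c \<and> b \<le> M \<and> d > b)
           \<or> (isT \<and> a > b \<and> b \<ge> c \<and> b \<ge> m \<and> d < b)) then
        Some (modat (\<lambda>t. case t of Leaf \<Rightarrow> Leaf | Node l x r \<Rightarrow> Node l x (Node r b Leaf)) dpos T')
      else if hasd \<and> ((isU \<and> a < b \<and> b \<le> M \<and> d = b)
           \<or> (isT \<and> a < b \<and> b \<le> c \<and> b \<le> M \<and> d = b)) then
        Some (modat (\<lambda>t. case t of Leaf \<Rightarrow> Leaf | Node l x r \<Rightarrow> Node (Node l b Leaf) x r) dpos T')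
      else if hasd \<and> ((isU \<and> a > b \<and> b \<ge> m \<and> d = b)
           \<or> (isT \<and> a > b \<and> b \<ge> c \<and> b \<ge> m \<and> d = b)) then
        Some (modat (\<lambda>t. case t of Leaf \<Rightarrow> Leaf | Node l x r \<Rightarrow> Node r x (Node l b Leaf)) dpos T')
      else None)"

end

theory Submission
  imports Defs
begin

text \<open>We compute \<open>\<Phi>\<close> by recursion along the principal path of \<open>T\<close>. Write \<open>a = a(T)\<close>.
  In case (1) the new node \<open>\<beta>\<close> is grafted onto the principal node, in case (2) the tree with
  \<open>S\<close> grafted onto its principal node becomes the left subtree of \<open>\<beta>\<close>, and in cases
  (3)--(5) \<open>\<beta>\<close> is inserted at the vertex \<open>\<delta>\<close> below which the principal path carries no
  label on the far side of \<open>b\<close> as seen from \<open>a\<close>. In every case \<open>\<beta>\<close> becomes the principal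
  node, so the weight and the principal label of the result can be read off, and the Smirnov
  conditions only have to be checked around \<open>\<beta>\<close>.

  Conversely, \<open>\<beta>\<close> is found by walking down the principal path of a tree; the labels around it
  determine which case produced the tree, and in cases (2)--(5) the grafted part \<open>S\<close> is
  recovered by cutting the principal path at the first right edge whose child lies beyond \<open>b\<close>.
  This gives a two-sided inverse \<open>psi\<close>.\<close>

section \<open>The principal path, recursively\<close>

fun left_sub :: "tree \<Rightarrow> tree" where
  "left_sub Leaf = Leaf"
| "left_sub (Node l c r) = l"

fun right_sub :: "tree \<Rightarrow> tree" where
  "right_sub Leaf = Leaf"
| "right_sub (Node l c r) = r"

lemma lab_eq_Some_iff: "lab t = Some c \<longleftrightarrow> (\<exists>l r. t = Node l c r)"
  by (cases t) auto

lemma lab_eq_Some_rootlab: "t \<noteq> Leaf \<Longrightarrow> lab t = Some (rootlab t)"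
  by (cases t) auto

lemma nnodes_pos_iff [simp]: "0 < nnodes t \<longleftrightarrow> t \<noteq> Leaf"
  by (cases t) auto

lemma sub_Leaf [simp]: "sub Leaf p = Leaf"
  by (cases p) auto

lemma ppath_eq_Nil_iff [simp]: "ppath t = [] \<longleftrightarrow> t = Leaf"
  by (cases t) auto

lemma alpha_pos_Node:
  "alpha_pos (Node l c r) =
     (if r = Leaf then [] else if lab l = Some c then L # alpha_pos l else R # alpha_pos r)"
  by (auto simp: alpha_pos_def last_map lab_eq_Some_iff)

lemma principal_label_Node [simp]:
  "principal_label (Node l c r) =
     (if r = Leaf then c else if lab l = Some c then principal_label l else principal_label r)"
  by (simp add: principal_label_def alpha_pos_Node)

lemma path_labels_Leaf [simp]: "path_labels Leaf = []"
  by (simp add: path_labels_def)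

lemma path_labels_Node [simp]:
  "path_labels (Node l c r) =
     c # (if r = Leaf then [] else if lab l = Some c then path_labels l else path_labels r)"
  by (simp add: path_labels_def o_def)

lemma path_labels_eq_Nil_iff [simp]: "path_labels t = [] \<longleftrightarrow> t = Leaf"
  by (cases t) auto

lemma principal_label_in_path_labels: "t \<noteq> Leaf \<Longrightarrow> principal_label t \<in> set (path_labels t)"
  by (induction t) (auto simp: lab_eq_Some_iff)

lemma rootlab_in_path_labels: "t \<noteq> Leaf \<Longrightarrow> rootlab t \<in> set (path_labels t)"
  by (cases t) auto

definition path_positions :: "(nat \<Rightarrow> bool) \<Rightarrow> tree \<Rightarrow> dir list list" where
  "path_positions q t = filter (\<lambda>p. q (rootlab (sub t p))) (ppath t)"

lemma path_positions_Node:
  "path_positions q (Node l c r) = (if q c then [[]] else []) @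
     (if r = Leaf then [] else if lab l = Some c then map (Cons L) (path_positions q l)
      else map (Cons R) (path_positions q r))"
  by (auto simp: path_positions_def filter_map o_def)

lemma path_positions_eq_Nil_iff: "path_positions q t = [] \<longleftrightarrow> (\<forall>x\<in>set (path_labels t). \<not> q x)"
  by (auto simp: path_positions_def path_labels_def filter_empty_conv)

section \<open>Grafting and cutting along the principal path\<close>

fun graft :: "tree \<Rightarrow> tree \<Rightarrow> tree" where
  "graft y Leaf = Leaf"
| "graft y (Node l c r) =
     (if r = Leaf then Node l c y
      else if lab l = Some c then Node (graft y l) c r
      else Node l c (graft y r))"

lemma modat_alpha_pos_eq_graft:
  "modat (\<lambda>t. case t of Leaf \<Rightarrow> Leaf | Node l x r \<Rightarrow> Node l x y) (alpha_pos T) T = graft y T"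
proof (induction T)
  case Leaf
  then show ?case by (cases "alpha_pos Leaf") auto
next
  case (Node l c r)
  then show ?case by (auto simp: alpha_pos_Node)
qed

lemma lab_graft [simp]: "lab (graft y t) = lab t"
  by (cases t) auto

lemma rootlab_graft [simp]: "rootlab (graft y t) = rootlab t"
  by (cases t) auto

lemma graft_eq_Leaf_iff [simp]: "graft y t = Leaf \<longleftrightarrow> t = Leaf"
  by (cases t) auto

lemma right_sub_graft: "y \<noteq> Leaf \<Longrightarrow> t \<noteq> Leaf \<Longrightarrow> right_sub (graft y t) \<noteq> Leaf"
  by (induction t) auto

lemma nnodes_graft: "t \<noteq> Leaf \<Longrightarrow> nnodes (graft y t) = nnodes t + nnodes y"
  by (induction t) (auto simp: lab_eq_Some_iff)

lemma labels_pos_graft: "labels_pos t \<Longrightarrow> labels_pos y \<Longrightarrow> labels_pos (graft y t)"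
  by (induction t) auto

lemma principal_label_graft:
  "smir_local t \<Longrightarrow> t \<noteq> Leaf \<Longrightarrow> y \<noteq> Leaf \<Longrightarrow> principal_label (graft y t) = principal_label y"
  by (induction t) (auto simp: lab_eq_Some_iff)

lemma smir_local_graft:
  "smir_local t \<Longrightarrow> smir_local y \<Longrightarrow> y = Leaf \<or> rootlab y \<noteq> principal_label t \<Longrightarrow>
   smir_local (graft y t)"
  by (induction t) (auto simp: lab_eq_Some_iff)

fun cut_path :: "(nat \<Rightarrow> bool) \<Rightarrow> tree \<Rightarrow> tree \<times> tree" where
  "cut_path P Leaf = (Leaf, Leaf)"
| "cut_path P (Node l c r) =
     (if r = Leaf then (Node l c r, Leaf)
      else if lab l = Some c then apfst (\<lambda>l'. Node l' c r) (cut_path P l)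
      else if P (rootlab r) then (Node l c Leaf, r)
      else apfst (Node l c) (cut_path P r))"

lemma lab_fst_cut_path [simp]: "lab (fst (cut_path P t)) = lab t"
  by (cases t) auto

lemma fst_cut_path_eq_Leaf_iff [simp]: "fst (cut_path P t) = Leaf \<longleftrightarrow> t = Leaf"
  by (cases t) auto

lemma graft_cut_path: "graft (snd (cut_path P t)) (fst (cut_path P t)) = t"
  by (induction t) (auto simp: lab_eq_Some_iff)

lemma cut_path_graft:
  "smir_local t \<Longrightarrow> t \<noteq> Leaf \<Longrightarrow> \<forall>x\<in>set (path_labels t). \<not> P x \<Longrightarrow> y = Leaf \<or> P (rootlab y) \<Longrightarrow>
   cut_path P (graft y t) = (t, y)"
proof (induction t)
  case (Node l c r)
  consider "r = Leaf" | "r \<noteq> Leaf" "lab l = Some c" | "r \<noteq> Leaf" "lab l \<noteq> Some c"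
    by blast
  then show ?case
  proof cases
    case 1
    with Node.prems show ?thesis by (auto simp: lab_eq_Some_iff)
  next
    case 2
    then have "l \<noteq> Leaf" by auto
    with 2 Node.IH(1) Node.prems show ?thesis by simp
  next
    case 3
    then have "rootlab r \<in> set (path_labels r)" by (simp add: rootlab_in_path_labels)
    with 3 Node.IH(2) Node.prems show ?thesis by simp
  qed
qed simp

lemma path_labels_fst_cut_path:
  "\<not> P (rootlab t) \<Longrightarrow> \<forall>x\<in>set (path_labels (fst (cut_path P t))). \<not> P x"
proof (induction t)
  case (Node l c r)
  consider "r = Leaf" | "r \<noteq> Leaf" "lab l = Some c" | "r \<noteq> Leaf" "lab l \<noteq> Some c"
    by blast
  then show ?case
  proof cases
    case 1
    with Node.prems show ?thesis by simp
  next
    case 2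
    then have "rootlab l = c" by (auto simp: lab_eq_Some_iff)
    with 2 Node.IH(1) Node.prems show ?thesis by simp
  next
    case 3
    with Node.IH(2) Node.prems show ?thesis by simp
  qed
qed simp

lemma snd_cut_path: "snd (cut_path P t) = Leaf \<or> P (rootlab (snd (cut_path P t)))"
  by (induction t) auto

lemma smir_local_cut_path:
  "smir_local t \<Longrightarrow> smir_local (fst (cut_path P t)) \<and> smir_local (snd (cut_path P t))"
proof (induction t)
  case (Node l c r)
  then show ?case by (cases "r = Leaf") (auto split: if_splits)
qed simp

lemma labels_pos_cut_path:
  "labels_pos t \<Longrightarrow> labels_pos (fst (cut_path P t)) \<and> labels_pos (snd (cut_path P t))"
  by (induction t) auto

section \<open>A recursive description of \<open>\<Phi>\<close>\<close>

text \<open>\<open>beyond a b x\<close>: seen from \<open>a\<close>, the label \<open>x\<close> lies at or past \<open>b\<close>. For \<open>a = a(T) \<noteq> b\<close>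
  the vertex \<open>\<delta>\<close> of the paper is the last vertex of the principal path whose label is beyond
  \<open>b\<close>.\<close>

definition beyond :: "nat \<Rightarrow> nat \<Rightarrow> nat \<Rightarrow> bool" where
  "beyond a b x \<longleftrightarrow> (if a < b then b \<le> x else x \<le> b)"

lemma beyond_if_less: "a < b \<Longrightarrow> beyond a b x \<longleftrightarrow> b \<le> x"
  by (simp add: beyond_def)

lemma beyond_if_greater: "b < a \<Longrightarrow> beyond a b x \<longleftrightarrow> x \<le> b"
  by (simp add: beyond_def)

lemma beyond_self_iff [simp]: "beyond a b a \<longleftrightarrow> a = b"
  by (auto simp: beyond_def)

lemma beyond_target [simp]: "beyond a b b"
  by (simp add: beyond_def)

lemma beyond_cong: "\<not> beyond a b x \<Longrightarrow> beyond x b = beyond a b"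
  unfolding beyond_def by (auto simp: fun_eq_iff)

fun second_tree :: "second \<Rightarrow> tree" where
  "second_tree (Tr s) = s"
| "second_tree _ = Leaf"

definition second_of :: "tree \<Rightarrow> second" where
  "second_of s = (if s = Leaf then U else Tr s)"

lemma second_tree_second_of [simp]: "second_tree (second_of s) = s"
  by (simp add: second_of_def)

lemma second_of_second_tree: "S \<noteq> D \<Longrightarrow> S \<noteq> Tr Leaf \<Longrightarrow> second_of (second_tree S) = S"
  by (cases S) (auto simp: second_of_def)

text \<open>Cases (1), (2) and (3)--(5) of \<open>\<Phi>\<close>, named after the place where \<open>\<beta>\<close> is attached.\<close>

definition alpha_case :: "second \<Rightarrow> nat \<Rightarrow> nat \<Rightarrow> bool" where
  "alpha_case S a b \<longleftrightarrow> S = D \<or> (\<exists>s. S = Tr s \<and> \<not> beyond a b (rootlab s))"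

definition root_case :: "tree \<Rightarrow> second \<Rightarrow> nat \<Rightarrow> bool" where
  "root_case T S b \<longleftrightarrow> \<not> alpha_case S (principal_label T) b
     \<and> (\<forall>x\<in>set (path_labels T). \<not> beyond (principal_label T) b x)"

definition delta_case :: "tree \<Rightarrow> second \<Rightarrow> nat \<Rightarrow> bool" where
  "delta_case T S b \<longleftrightarrow> principal_label T \<noteq> b \<and> \<not> alpha_case S (principal_label T) b
     \<and> \<not> root_case T S b"

lemma not_alpha_case_iff:
  "S \<noteq> Tr Leaf \<Longrightarrow>
   \<not> alpha_case S a b \<longleftrightarrow> S \<noteq> D \<and> (second_tree S = Leaf \<or> beyond a b (rootlab (second_tree S)))"
  by (cases S) (auto simp: alpha_case_def)

lemma root_case_principal_label: "root_case T S b \<Longrightarrow> T \<noteq> Leaf \<Longrightarrow> principal_label T \<noteq> b"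
  using principal_label_in_path_labels[of T] by (auto simp: root_case_def)

definition split_off :: "nat \<Rightarrow> tree \<Rightarrow> tree \<times> second \<times> nat" where
  "split_off b u = (let (T, s) = cut_path (beyond (rootlab u) b) u in (T, second_of s, b))"

lemma split_off_graft:
  assumes "smir_local T" "T \<noteq> Leaf" "\<forall>x\<in>set (path_labels T). \<not> beyond (principal_label T) b x"
    and "s = Leaf \<or> beyond (principal_label T) b (rootlab s)"
  shows "split_off b (graft s T) = (T, second_of s, b)"
proof -
  have "\<not> beyond (principal_label T) b (rootlab T)"
    using assms(2,3) rootlab_in_path_labels by blast
  then have "beyond (rootlab T) b = beyond (principal_label T) b"
    by (rule beyond_cong)
  with assms show ?thesis
    by (simp add: split_off_def cut_path_graft)
qed

lemma split_off_inverse: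
  assumes u: "smirnov u" "rootlab u \<noteq> b" and eq: "split_off b u = (T, S, b')"
  shows "b' = b" "smirnov T" "\<forall>s. S = Tr s \<longrightarrow> smirnov s" "root_case T S b"
    "graft (second_tree S) T = u"
proof -
  let ?P = "beyond (rootlab u) b"
  have T: "T = fst (cut_path ?P u)" and S: "S = second_of (snd (cut_path ?P u))" and "b' = b"
    using eq by (auto simp: split_off_def split: prod.splits)
  then show "b' = b" by simp
  have sm: "smir_local u" "labels_pos u" "u \<noteq> Leaf"
    using u by (auto simp: smirnov_def)
  show "smirnov T" "\<forall>s. S = Tr s \<longrightarrow> smirnov s"
    using smir_local_cut_path[OF sm(1)] labels_pos_cut_path[OF sm(2)] sm(3)
    by (auto simp: T S smirnov_def second_of_def)
  show "graft (second_tree S) T = u"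
    by (simp add: T S graft_cut_path)
  have path: "\<forall>x\<in>set (path_labels T). \<not> ?P x"
    using path_labels_fst_cut_path[of ?P u] u(2) by (simp add: T)
  then have "\<not> ?P (principal_label T)"
    using sm(3) principal_label_in_path_labels[of T] by (auto simp: T)
  then have same: "beyond (principal_label T) b = ?P"
    by (rule beyond_cong)
  show "root_case T S b"
    using path snd_cut_path[of ?P u]
    by (auto simp: root_case_def alpha_case_def same S second_of_def)
qed

text \<open>Cases (3)--(5): \<open>\<delta>\<close> is the vertex of the principal path below which no label lies beyond
  \<open>b\<close>; when \<open>\<delta>\<close> is found, the principal path continues with its right child.\<close>

fun insert_at_delta :: "nat \<Rightarrow> nat \<Rightarrow> tree \<Rightarrow> tree \<Rightarrow> tree" where
  "insert_at_delta a b s Leaf = Leaf"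
| "insert_at_delta a b s (Node l c r) =
     (if r = Leaf then Leaf
      else if lab l = Some c then Node (insert_at_delta a b s l) c r
      else if \<forall>x\<in>set (path_labels r). \<not> beyond a b x then
        (if c \<noteq> b then Node l c (Node (graft s r) b Leaf)
         else if a < b then Node (Node l b Leaf) c (graft s r)
         else Node (graft s r) c (Node l b Leaf))
      else Node l c (insert_at_delta a b s r))"

definition phi :: "tree \<Rightarrow> second \<Rightarrow> nat \<Rightarrow> tree" where
  "phi T S b =
     (if alpha_case S (principal_label T) b then graft (Node (second_tree S) b Leaf) T
      else if root_case T S b then Node (graft (second_tree S) T) b Leaf
      else insert_at_delta (principal_label T) b (second_tree S) T)"

lemma phi_alpha_case:
  "alpha_case S (principal_label T) b \<Longrightarrow> phi T S b = graft (Node (second_tree S) b Leaf) T"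
  by (simp add: phi_def)

lemma phi_root_case: "root_case T S b \<Longrightarrow> phi T S b = Node (graft (second_tree S) T) b Leaf"
  by (simp add: phi_def root_case_def)

lemma phi_Node_left:
  assumes "r \<noteq> Leaf" "lab l = Some c" "\<not> root_case l S b"
  shows "phi (Node l c r) S b = Node (phi l S b) c r"
  using assms by (auto simp: phi_def root_case_def)

lemma phi_Node_right:
  assumes "r \<noteq> Leaf" "lab l \<noteq> Some c" "\<not> root_case r S b"
  shows "phi (Node l c r) S b = Node l c (phi r S b)"
  using assms by (auto simp: phi_def root_case_def)

lemma phi_Node_delta:
  assumes "r \<noteq> Leaf" "lab l \<noteq> Some c" "root_case r S b" "beyond (principal_label r) b c"
  shows "phi (Node l c r) S b =
    (if c \<noteq> b then Node l c (Node (graft (second_tree S) r) b Leaf)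
     else if principal_label r < b then Node (Node l b Leaf) c (graft (second_tree S) r)
     else Node (graft (second_tree S) r) c (Node l b Leaf))"
  using assms by (auto simp: phi_def root_case_def)

lemma delta_case_induct [consumes 1, case_names left here right]:
  assumes "delta_case T S b"
    and left: "\<And>l c r. r \<noteq> Leaf \<Longrightarrow> lab l = Some c \<Longrightarrow> delta_case l S b \<Longrightarrow> P l \<Longrightarrow> P (Node l c r)"
    and here: "\<And>l c r. r \<noteq> Leaf \<Longrightarrow> lab l \<noteq> Some c \<Longrightarrow> root_case r S b \<Longrightarrow>
      beyond (principal_label r) b c \<Longrightarrow> P (Node l c r)"
    and right: "\<And>l c r. r \<noteq> Leaf \<Longrightarrow> lab l \<noteq> Some c \<Longrightarrow> delta_case r S b \<Longrightarrow> P r \<Longrightarrow> P (Node l c r)"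
  shows "P T"
  using assms(1)
proof (induction T)
  case Leaf
  then show ?case by (simp add: delta_case_def root_case_def)
next
  case (Node l c r)
  have "r \<noteq> Leaf"
    using Node.prems by (auto simp: delta_case_def root_case_def)
  show ?case
  proof (cases "lab l = Some c")
    case True
    then have "rootlab l = c" "l \<noteq> Leaf" by (auto simp: lab_eq_Some_iff)
    then have "delta_case l S b"
      using Node.prems True \<open>r \<noteq> Leaf\<close> rootlab_in_path_labels[of l]
      by (auto simp: delta_case_def root_case_def)
    with \<open>r \<noteq> Leaf\<close> True Node.IH(1) show ?thesis by (blast intro: left)
  next
    case False
    show ?thesis
    proof (cases "root_case r S b")
      case True
      then have "beyond (principal_label r) b c"
        using Node.prems \<open>r \<noteq> Leaf\<close> False by (auto simp: delta_case_def root_case_def)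
      with \<open>r \<noteq> Leaf\<close> False True show ?thesis by (rule here)
    next
      case nr: False
      then have "delta_case r S b"
        using Node.prems \<open>r \<noteq> Leaf\<close> False by (auto simp: delta_case_def root_case_def)
      with \<open>r \<noteq> Leaf\<close> False Node.IH(2) show ?thesis by (blast intro: right)
    qed
  qed
qed

lemma phi_cases:
  fixes T :: tree and S :: second and b :: nat
  assumes "principal_label T \<noteq> b"
  obtains (alpha) "alpha_case S (principal_label T) b" | (root) "root_case T S b"
    | (delta) "delta_case T S b"
  using assms by (auto simp: delta_case_def)

lemma delta_case_not_Leaf: "delta_case T S b \<Longrightarrow> T \<noteq> Leaf"
  by (auto simp: delta_case_def root_case_def)

lemma second_tree_not_principal:
  "\<not> alpha_case S a b \<Longrightarrow> a \<noteq> b \<Longrightarrow> second_tree S = Leaf \<or> rootlab (second_tree S) \<noteq> a"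
  by (cases S) (auto simp: alpha_case_def)

lemma root_case_rootlab: "root_case T S b \<Longrightarrow> T \<noteq> Leaf \<Longrightarrow> \<not> beyond (principal_label T) b (rootlab T)"
  using rootlab_in_path_labels[of T] by (auto simp: root_case_def)

section \<open>The image of \<open>\<Phi>\<close>\<close>

definition left_edge_wt :: "tree \<Rightarrow> nat \<Rightarrow> var multiset" where
  "left_edge_wt y c = (case lab y of None \<Rightarrow> {#} | Some a \<Rightarrow> {#if a \<le> c then LamBar else Lam#})"

definition right_edge_wt :: "nat \<Rightarrow> tree \<Rightarrow> var multiset" where
  "right_edge_wt c y = (case lab y of None \<Rightarrow> {#} | Some b \<Rightarrow> {#if c \<le> b then RhoBar else Rho#})"

lemma wt_Node_edges:
  "wt (Node l c r) = {#X c#} + wt l + wt r + left_edge_wt l c + right_edge_wt c r"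
  by (cases l; cases r) (simp_all add: left_edge_wt_def right_edge_wt_def)

lemma wt_graft: "t \<noteq> Leaf \<Longrightarrow> wt (graft y t) = wt t + wt y + right_edge_wt (principal_label t) y"
proof (induction t)
  case (Node l c r)
  consider "r = Leaf" | "r \<noteq> Leaf" "lab l = Some c" | "r \<noteq> Leaf" "lab l \<noteq> Some c"
    by blast
  then show ?case
  proof cases
    case 1
    then show ?thesis by (simp add: wt_Node_edges right_edge_wt_def del: wt.simps(2))
  next
    case 2
    then have "l \<noteq> Leaf" by auto
    with 2 Node.IH(1) show ?thesis
      by (simp add: wt_Node_edges left_edge_wt_def del: wt.simps(2))
  next
    case 3
    with Node.IH(2) show ?thesis
      by (simp add: wt_Node_edges right_edge_wt_def del: wt.simps(2))
  qed
qed simp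

lemma wtriple_not_alpha_case:
  assumes "(T, S, b) \<in> Xset" "\<not> alpha_case S (principal_label T) b"
  shows "wtriple (T, S, b) = wt T + wt (second_tree S)
    + right_edge_wt (principal_label T) (second_tree S) + {#X b#}
    + {#if principal_label T < b then LamBar else Lam#}"
  using assms
  by (cases S) (auto simp: Xset_def smirnov_def alpha_case_def right_edge_wt_def beyond_def
      lab_eq_Some_rootlab split: if_splits)

lemma phi_delta_case_shape:
  "delta_case T S b \<Longrightarrow> \<exists>l' r'. phi T S b = Node l' (rootlab T) r' \<and> r' \<noteq> Leaf"
proof (induction rule: delta_case_induct)
  case (left l c r)
  then show ?case by (auto simp: phi_Node_left delta_case_def lab_eq_Some_iff)
next
  case (here l c r)
  then show ?case by (simp add: phi_Node_delta)
next
  case (right l c r)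
  then show ?case by (auto simp: phi_Node_right delta_case_def)
qed

lemma lab_phi_delta_case: "delta_case T S b \<Longrightarrow> lab (phi T S b) = lab T"
  using phi_delta_case_shape[of T S b] delta_case_not_Leaf[of T S b]
  by (auto simp: lab_eq_Some_rootlab)

lemma nnodes_phi_delta_case:
  "delta_case T S b \<Longrightarrow> nnodes (phi T S b) = Suc (nnodes T + nnodes (second_tree S))"
proof (induction rule: delta_case_induct)
  case (left l c r)
  then show ?case by (simp add: phi_Node_left delta_case_def)
next
  case (here l c r)
  then show ?case by (simp add: phi_Node_delta nnodes_graft)
next
  case (right l c r)
  then show ?case by (simp add: phi_Node_right delta_case_def)
qed

lemma labels_pos_phi_delta_case:
  "delta_case T S b \<Longrightarrow> labels_pos T \<Longrightarrow> labels_pos (second_tree S) \<Longrightarrow> 1 \<le> b \<Longrightarrow>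
   labels_pos (phi T S b)"
proof (induction rule: delta_case_induct)
  case (left l c r)
  then show ?case by (simp add: phi_Node_left delta_case_def)
next
  case (here l c r)
  then show ?case by (simp add: phi_Node_delta labels_pos_graft)
next
  case (right l c r)
  then show ?case by (simp add: phi_Node_right delta_case_def)
qed

lemma principal_label_phi_delta_case: "delta_case T S b \<Longrightarrow> principal_label (phi T S b) = b"
proof (induction rule: delta_case_induct)
  case (left l c r)
  then show ?case by (simp add: phi_Node_left delta_case_def lab_phi_delta_case)
next
  case (here l c r)
  then have "rootlab r \<noteq> b"
    using root_case_rootlab[of r S b] by auto
  with here show ?case by (simp add: phi_Node_delta lab_eq_Some_rootlab)
next
  case (right l c r)
  then have "phi r S b \<noteq> Leaf"
    using lab_phi_delta_case[of r S b] by (cases r) auto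
  with right show ?case by (simp add: phi_Node_right delta_case_def lab_phi_delta_case)
qed

lemma smir_local_phi_delta_case:
  "delta_case T S b \<Longrightarrow> smir_local T \<Longrightarrow> smir_local (second_tree S) \<Longrightarrow> smir_local (phi T S b)"
proof (induction rule: delta_case_induct)
  case (left l c r)
  then show ?case by (simp add: phi_Node_left delta_case_def lab_phi_delta_case)
next
  case (here l c r)
  let ?a = "principal_label r"
  have side: "\<not> beyond ?a b (rootlab r)" "beyond ?a b c" "?a \<noteq> b"
    using here root_case_rootlab[of r S b] root_case_principal_label[of r S b] by auto
  have "smir_local (graft (second_tree S) r)"
    using here side(3) second_tree_not_principal[of S ?a b]
    by (intro smir_local_graft) (auto simp: root_case_def)
  with here side show ?case
    by (auto simp: phi_Node_delta lab_eq_Some_rootlab beyond_def)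
next
  case (right l c r)
  then show ?case by (simp add: phi_Node_right delta_case_def lab_phi_delta_case)
qed

lemma wt_phi_delta_case:
  "delta_case T S b \<Longrightarrow> wt (phi T S b) = wt T + wt (second_tree S)
     + right_edge_wt (principal_label T) (second_tree S) + {#X b#}
     + {#if principal_label T < b then LamBar else Lam#}"
proof (induction rule: delta_case_induct)
  case (left l c r)
  then show ?case
    by (simp add: phi_Node_left delta_case_def wt_Node_edges left_edge_wt_def lab_phi_delta_case
        del: wt.simps(2))
next
  case (here l c r)
  let ?a = "principal_label r"
  have side: "\<not> beyond ?a b (rootlab r)" "beyond ?a b c" "?a \<noteq> b"
    using here root_case_rootlab[of r S b] root_case_principal_label[of r S b] by auto
  with here show ?case
    by (auto simp: phi_Node_delta wt_Node_edges wt_graft left_edge_wt_def right_edge_wt_def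
        lab_eq_Some_rootlab beyond_def simp del: wt.simps(2) split: if_splits)
next
  case (right l c r)
  then show ?case
    by (simp add: phi_Node_right delta_case_def wt_Node_edges right_edge_wt_def lab_phi_delta_case
        del: wt.simps(2))
qed

lemma smirnov_phi:
  assumes "(T, S, b) \<in> Xset"
  shows "smirnov (phi T S b)"
proof -
  have T: "T \<noteq> Leaf" "smir_local T" "labels_pos T" and ab: "principal_label T \<noteq> b" and "1 \<le> b"
    and s: "smir_local (second_tree S)" "labels_pos (second_tree S)"
    using assms by (cases S; auto simp: Xset_def smirnov_def)+
  from ab show ?thesis
  proof (cases rule: phi_cases[where S = S])
    case alpha
    then have "smir_local (Node (second_tree S) b Leaf)"
      using s by (cases S) (auto simp: alpha_case_def lab_eq_Some_iff)
    with alpha T ab s \<open>1 \<le> b\<close> show ?thesis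
      by (simp add: phi_alpha_case smirnov_def smir_local_graft labels_pos_graft)
  next
    case root
    then have "\<not> beyond (principal_label T) b (rootlab T)"
      using T(1) by (rule root_case_rootlab)
    moreover have "smir_local (graft (second_tree S) T)"
      using root T ab s second_tree_not_principal[of S "principal_label T" b]
      by (intro smir_local_graft) (auto simp: root_case_def)
    ultimately show ?thesis
      using root T s \<open>1 \<le> b\<close>
      by (auto simp: phi_root_case smirnov_def labels_pos_graft lab_eq_Some_rootlab)
  next
    case delta
    then have "phi T S b \<noteq> Leaf"
      using lab_phi_delta_case[of T S b] T(1) by (cases T) auto
    with delta show ?thesis
      using T s \<open>1 \<le> b\<close> smir_local_phi_delta_case labels_pos_phi_delta_case
      by (simp add: smirnov_def)
  qed
qed

lemma two_le_nnodes_phi: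
  assumes "T \<noteq> Leaf" "principal_label T \<noteq> b"
  shows "2 \<le> nnodes (phi T S b)"
proof -
  have "1 \<le> nnodes T"
    using assms(1) by (cases T) auto
  from assms(2) show ?thesis
  proof (cases rule: phi_cases[where S = S])
    case alpha
    with \<open>1 \<le> nnodes T\<close> show ?thesis using assms(1) by (simp add: phi_alpha_case nnodes_graft)
  next
    case root
    with \<open>1 \<le> nnodes T\<close> show ?thesis using assms(1) by (simp add: phi_root_case nnodes_graft)
  next
    case delta
    with \<open>1 \<le> nnodes T\<close> show ?thesis by (simp add: nnodes_phi_delta_case)
  qed
qed

lemma principal_label_phi:
  assumes "T \<noteq> Leaf" "smir_local T" "principal_label T \<noteq> b"
  shows "principal_label (phi T S b) = b"
  using assms(3)
proof (cases rule: phi_cases[where S = S])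
  case alpha
  then show ?thesis using assms by (simp add: phi_alpha_case principal_label_graft)
next
  case root
  then show ?thesis by (simp add: phi_root_case)
next
  case delta
  then show ?thesis by (rule principal_label_phi_delta_case)
qed

lemma wt_phi:
  assumes "(T, S, b) \<in> Xset"
  shows "wt (phi T S b) = wtriple (T, S, b)"
proof -
  have T: "T \<noteq> Leaf" and ab: "principal_label T \<noteq> b"
    using assms by (auto simp: Xset_def smirnov_def)
  from ab show ?thesis
  proof (cases rule: phi_cases[where S = S])
    case alpha
    with assms T ab show ?thesis
      by (cases S) (auto simp: Xset_def smirnov_def phi_alpha_case wt_graft alpha_case_def
          wt_Node_edges left_edge_wt_def right_edge_wt_def beyond_def lab_eq_Some_rootlab
          simp del: wt.simps(2) split: if_splits)
  next
    case root
    then have "\<not> beyond (principal_label T) b (rootlab T)"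
      using T by (rule root_case_rootlab)
    with root T ab show ?thesis
      using wtriple_not_alpha_case[OF assms]
      by (auto simp: phi_root_case wt_graft root_case_def wt_Node_edges left_edge_wt_def
          right_edge_wt_def beyond_def lab_eq_Some_rootlab simp del: wt.simps(2) split: if_splits)
  next
    case delta
    then show ?thesis
      using wtriple_not_alpha_case[OF assms] by (simp add: wt_phi_delta_case delta_case_def)
  qed
qed

section \<open>The inverse map\<close>

text \<open>\<open>psi\<close> walks down the principal path to the parent of the principal node \<open>\<beta>\<close> (or stops
  at \<open>\<beta>\<close> if it is the root) and undoes the case of \<open>\<Phi>\<close> that put \<open>\<beta>\<close> there.\<close>

fun psi :: "tree \<Rightarrow> tree \<times> second \<times> nat" where
  "psi Leaf = (Leaf, D, 0)"
| "psi (Node l c r) =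
     (if r = Leaf then split_off c l
      else if lab l = Some c then
        (if right_sub l = Leaf then apfst (Node (left_sub l) c) (split_off c r)
         else apfst (\<lambda>T. Node T c r) (psi l))
      else if right_sub r = Leaf then
        (let x = rootlab r; y = left_sub r in
         if x = c then apfst (Node y c) (split_off c l)
         else if y = Leaf then (Node l c Leaf, D, x)
         else if \<not> beyond c x (rootlab y) then (Node l c Leaf, Tr y, x)
         else apfst (Node l c) (split_off x y))
      else apfst (Node l c) (psi r))"

declare psi.simps(2) [simp del]

lemma split_off_graft_second_tree:
  assumes "root_case T S b" "smir_local T" "T \<noteq> Leaf" "S \<noteq> Tr Leaf"
  shows "split_off b (graft (second_tree S) T) = (T, S, b)"
proof -
  have "S \<noteq> D" "second_tree S = Leaf \<or> beyond (principal_label T) b (rootlab (second_tree S))"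
    using assms(1,4) not_alpha_case_iff[of S "principal_label T" b] by (auto simp: root_case_def)
  with assms show ?thesis
    by (simp add: split_off_graft root_case_def second_of_second_tree)
qed

lemma psi_phi_alpha_case:
  "smir_local T \<Longrightarrow> T \<noteq> Leaf \<Longrightarrow> alpha_case S (principal_label T) b \<Longrightarrow> principal_label T \<noteq> b \<Longrightarrow>
   S \<noteq> Tr Leaf \<Longrightarrow> psi (graft (Node (second_tree S) b Leaf) T) = (T, S, b)"
proof (induction T)
  case (Node l c r)
  consider "r = Leaf" | "r \<noteq> Leaf" "lab l = Some c" | "r \<noteq> Leaf" "lab l \<noteq> Some c"
    by blast
  then show ?case
  proof cases
    case 1
    with Node.prems show ?thesis
      by (cases S) (auto simp: psi.simps(2) alpha_case_def)
  next
    case 2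
    then have "l \<noteq> Leaf" by auto
    with 2 Node.IH(1) Node.prems show ?thesis
      by (simp add: psi.simps(2) right_sub_graft)
  next
    case 3
    with Node.IH(2) Node.prems show ?thesis
      by (simp add: psi.simps(2) right_sub_graft)
  qed
qed simp

lemma psi_phi_delta_case:
  "delta_case T S b \<Longrightarrow> smir_local T \<Longrightarrow> S \<noteq> Tr Leaf \<Longrightarrow> psi (phi T S b) = (T, S, b)"
proof (induction rule: delta_case_induct)
  case (left l c r)
  then obtain l' r' where "phi l S b = Node l' c r'" "r' \<noteq> Leaf"
    using phi_delta_case_shape[of l S b] by (auto simp: lab_eq_Some_iff)
  with left show ?case
    by (simp add: phi_Node_left delta_case_def psi.simps(2))
next
  case (here l c r)
  let ?a = "principal_label r"
  have side: "\<not> beyond ?a b (rootlab r)" "beyond ?a b c" "?a \<noteq> b"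
    using here root_case_rootlab[of r S b] root_case_principal_label[of r S b] by auto
  have split: "split_off b (graft (second_tree S) r) = (r, S, b)"
    using here by (intro split_off_graft_second_tree) auto
  consider "c \<noteq> b" | "c = b" "?a < b" | "c = b" "b < ?a"
    using side(3) by linarith
  then show ?case
  proof cases
    case 1
    then have "beyond c b (rootlab r)"
      using side by (auto simp: beyond_def split: if_splits)
    with 1 here split show ?thesis
      by (simp add: phi_Node_delta psi.simps(2) Let_def)
  next
    case 2
    with here split show ?thesis
      by (simp add: phi_Node_delta psi.simps(2))
  next
    case 3
    then have "rootlab r \<noteq> c"
      using side(1) by auto
    with 3 here split show ?thesis
      by (simp add: phi_Node_delta psi.simps(2) lab_eq_Some_rootlab)
  qed
next
  case (right l c r)
  then obtain l' r' where "phi r S b = Node l' (rootlab r) r'" "r' \<noteq> Leaf"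
    using phi_delta_case_shape[of r S b] by auto
  with right show ?case
    by (simp add: phi_Node_right delta_case_def psi.simps(2))
qed

lemma psi_phi:
  assumes "(T, S, b) \<in> Xset"
  shows "psi (phi T S b) = (T, S, b)"
proof -
  have T: "T \<noteq> Leaf" "smir_local T" and ab: "principal_label T \<noteq> b" and S: "S \<noteq> Tr Leaf"
    using assms by (auto simp: Xset_def smirnov_def)
  from ab show ?thesis
  proof (cases rule: phi_cases[where S = S])
    case alpha
    with T ab S show ?thesis by (simp add: phi_alpha_case psi_phi_alpha_case)
  next
    case root
    with T S show ?thesis by (simp add: phi_root_case psi.simps(2) split_off_graft_second_tree)
  next
    case delta
    show ?thesis by (rule psi_phi_delta_case[OF delta T(2) S])
  qed
qed

lemma rootlab_phi:
  assumes "T \<noteq> Leaf" "principal_label T \<noteq> b" "\<not> root_case T S b"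
  shows "rootlab (phi T S b) = rootlab T"
  using assms(2)
proof (cases rule: phi_cases[where S = S])
  case alpha
  then show ?thesis by (simp add: phi_alpha_case)
next
  case root
  with assms(3) show ?thesis by simp
next
  case delta
  then show ?thesis using phi_delta_case_shape[of T S b] by auto
qed

lemma split_off_in_Xset:
  assumes "smirnov u" "rootlab u \<noteq> b" "1 \<le> b"
  obtains T S where "split_off b u = (T, S, b)" "(T, S, b) \<in> Xset" "root_case T S b"
    "graft (second_tree S) T = u"
proof -
  obtain T S b' where eq: "split_off b u = (T, S, b')"
    by (cases "split_off b u") auto
  note inv = split_off_inverse[OF assms(1,2) eq]
  then have "principal_label T \<noteq> b"
    using root_case_principal_label[of T S b] by (auto simp: smirnov_def)
  with inv assms(3) eq show ?thesis
    by (intro that) (auto simp: Xset_def)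
qed

lemma phi_psi_Node_Leaf:
  assumes "smirnov (Node l c Leaf)" "l \<noteq> Leaf"
  shows "\<exists>T S b. psi (Node l c Leaf) = (T, S, b) \<and> (T, S, b) \<in> Xset \<and> phi T S b = Node l c Leaf"
proof -
  have "smirnov l" "rootlab l \<noteq> c" "1 \<le> c"
    using assms by (auto simp: smirnov_def lab_eq_Some_rootlab)
  then obtain T S where "split_off c l = (T, S, c)" "(T, S, c) \<in> Xset" "root_case T S c"
    "graft (second_tree S) T = l"
    by (rule split_off_in_Xset)
  then show ?thesis
    by (simp add: psi.simps(2) phi_root_case)
qed

lemma phi_psi_Node_left_Leaf:
  assumes "smirnov (Node (Node l c Leaf) c r)"
  shows "\<exists>T S b. psi (Node (Node l c Leaf) c r) = (T, S, b) \<and> (T, S, b) \<in> Xset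
    \<and> phi T S b = Node (Node l c Leaf) c r"
proof -
  have r: "smirnov r" "rootlab r < c" and l: "lab l \<noteq> Some c" "smir_local l" "labels_pos l"
    and "1 \<le> c"
    using assms by (auto simp: smirnov_def lab_eq_Some_iff)
  then obtain T S where split: "split_off c r = (T, S, c)" "(T, S, c) \<in> Xset" "root_case T S c"
    and r_eq: "graft (second_tree S) T = r"
    by (metis less_irrefl split_off_in_Xset)
  have T: "T \<noteq> Leaf" "smir_local T" "labels_pos T" "rootlab T = rootlab r"
    using split(2) r_eq by (auto simp: Xset_def smirnov_def)
  then have "principal_label T < c"
    using root_case_rootlab[OF split(3) T(1)] r(2) by (auto simp: beyond_def split: if_splits)
  then have "phi (Node l c T) S c = Node (Node l c Leaf) c r"
    using T(1) l(1) split(3) r_eq by (simp add: phi_Node_delta)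
  moreover have "(Node l c T, S, c) \<in> Xset"
    using split(2) T l r(2) \<open>1 \<le> c\<close> by (auto simp: Xset_def smirnov_def lab_eq_Some_rootlab)
  ultimately show ?thesis
    using split(1) r(1) by (auto simp: psi.simps(2) smirnov_def)
qed

lemma phi_psi_Node_right_Leaf:
  assumes "smirnov (Node l c (Node y x Leaf))" "lab l \<noteq> Some c"
  shows "\<exists>T S b. psi (Node l c (Node y x Leaf)) = (T, S, b) \<and> (T, S, b) \<in> Xset
    \<and> phi T S b = Node l c (Node y x Leaf)"
proof -
  let ?t = "Node l c (Node y x Leaf)"
  have y: "lab y \<noteq> Some x" "y \<noteq> Leaf \<Longrightarrow> smirnov y" and "1 \<le> x" "1 \<le> c"
    and l: "smir_local l" "labels_pos l"
    using assms by (auto simp: smirnov_def)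
  consider "x = c" | "x \<noteq> c" "y = Leaf \<or> \<not> beyond c x (rootlab y)"
    | "x \<noteq> c" "y \<noteq> Leaf" "beyond c x (rootlab y)"
    by blast
  then show ?thesis
  proof cases
    case 1
    then obtain e where "lab l = Some e" "c < e"
      using assms(1) by (auto simp: smirnov_def)
    then have "smirnov l" "rootlab l \<noteq> c"
      using l by (auto simp: smirnov_def lab_eq_Some_iff)
    then obtain T S where split: "split_off c l = (T, S, c)" "(T, S, c) \<in> Xset" "root_case T S c"
      and l_eq: "graft (second_tree S) T = l"
      using \<open>1 \<le> c\<close> by (rule split_off_in_Xset)
    have T: "T \<noteq> Leaf" "smir_local T" "labels_pos T" "rootlab T = rootlab l"
      using split(2) l_eq by (auto simp: Xset_def smirnov_def)
    then have "c < principal_label T" "c < rootlab l"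
      using root_case_rootlab[OF split(3) T(1)] root_case_principal_label[OF split(3) T(1)]
        \<open>lab l = Some e\<close> \<open>c < e\<close>
      by (auto simp: beyond_def lab_eq_Some_iff split: if_splits)
    then have "phi (Node y c T) S c = ?t"
      using 1 T(1) y(1) split(3) l_eq by (simp add: phi_Node_delta)
    moreover have "(Node y c T, S, c) \<in> Xset"
      using 1 split(2) T y \<open>c < rootlab l\<close> assms(1)
      by (auto simp: Xset_def smirnov_def lab_eq_Some_rootlab)
    ultimately show ?thesis
      using split(1) 1 assms(2) by (auto simp: psi.simps(2))
  next
    case 2
    let ?S = "if y = Leaf then D else Tr y"
    have "psi ?t = (Node l c Leaf, ?S, x)"
      using 2 assms(2) by (auto simp: psi.simps(2))
    moreover have "alpha_case ?S c x"
      using 2 by (auto simp: alpha_case_def)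
    then have "phi (Node l c Leaf) ?S x = ?t"
      by (simp add: phi_alpha_case)
    moreover have "(Node l c Leaf, ?S, x) \<in> Xset"
      using 2 y l assms(2) \<open>1 \<le> x\<close> \<open>1 \<le> c\<close> by (auto simp: Xset_def smirnov_def)
    ultimately show ?thesis by blast
  next
    case 3
    have "rootlab y \<noteq> x"
      using 3 y(1) by (auto simp: lab_eq_Some_rootlab)
    then obtain T S where split: "split_off x y = (T, S, x)" "(T, S, x) \<in> Xset" "root_case T S x"
      and y_eq: "graft (second_tree S) T = y"
      using 3 y(2) \<open>1 \<le> x\<close> by (metis split_off_in_Xset)
    have T: "T \<noteq> Leaf" "smir_local T" "labels_pos T" "rootlab T = rootlab y"
      using split(2) y_eq by (auto simp: Xset_def smirnov_def)
    have side: "beyond (principal_label T) x c" "rootlab y \<noteq> c"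
      using root_case_rootlab[OF split(3) T(1)] 3 T(4) \<open>rootlab y \<noteq> x\<close>
      by (auto simp: beyond_def split: if_splits)
    then have "phi (Node l c T) S x = ?t"
      using 3 T(1) assms(2) split(3) y_eq by (simp add: phi_Node_delta)
    moreover have "(Node l c T, S, x) \<in> Xset"
      using split(2) T side(2) l assms(2) \<open>1 \<le> c\<close>
      by (auto simp: Xset_def smirnov_def lab_eq_Some_rootlab)
    ultimately show ?thesis
      using split(1) 3 assms(2) by (auto simp: psi.simps(2) Let_def)
  qed
qed

lemma phi_psi_Node_left:
  assumes t: "smirnov (Node l c r)" "r \<noteq> Leaf" "lab l = Some c" "right_sub l \<noteq> Leaf"
    and l: "psi l = (T, S, b)" "(T, S, b) \<in> Xset" "phi T S b = l"
  shows "psi (Node l c r) = (Node T c r, S, b) \<and> (Node T c r, S, b) \<in> Xset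
    \<and> phi (Node T c r) S b = Node l c r"
proof -
  have T: "T \<noteq> Leaf" "principal_label T \<noteq> b"
    using l(2) by (auto simp: Xset_def smirnov_def)
  have "\<not> root_case T S b"
    using t(4) l(3) by (auto simp: phi_root_case)
  then have "rootlab T = rootlab l"
    using rootlab_phi[OF T] l(3) by metis
  then have "lab T = Some c"
    using t(3) lab_eq_Some_rootlab[OF T(1)] by (cases l) auto
  have "psi (Node l c r) = (Node T c r, S, b)"
    using t(2-4) l(1) by (simp add: psi.simps(2))
  moreover have "phi (Node T c r) S b = Node l c r"
    using phi_Node_left[OF t(2) \<open>lab T = Some c\<close> \<open>\<not> root_case T S b\<close>] l(3) by simp
  moreover have "(Node T c r, S, b) \<in> Xset"
    using t(1-3) l(2) \<open>lab T = Some c\<close> T(2) by (simp add: Xset_def smirnov_def)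
  ultimately show ?thesis by blast
qed

lemma phi_psi_Node_right:
  assumes t: "smirnov (Node l c r)" "lab l \<noteq> Some c" "right_sub r \<noteq> Leaf"
    and r: "psi r = (T, S, b)" "(T, S, b) \<in> Xset" "phi T S b = r"
  shows "psi (Node l c r) = (Node l c T, S, b) \<and> (Node l c T, S, b) \<in> Xset
    \<and> phi (Node l c T) S b = Node l c r"
proof -
  have T: "T \<noteq> Leaf" "principal_label T \<noteq> b"
    using r(2) by (auto simp: Xset_def smirnov_def)
  have "\<not> root_case T S b"
    using t(3) r(3) by (auto simp: phi_root_case)
  then have "rootlab T = rootlab r"
    using rootlab_phi[OF T] r(3) by metis
  then have "lab T = lab r"
    using t(3) lab_eq_Some_rootlab[OF T(1)] by (cases r) auto
  have "psi (Node l c r) = (Node l c T, S, b)"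
    using t(2,3) r(1) by (auto simp: psi.simps(2))
  moreover have "phi (Node l c T) S b = Node l c r"
    using phi_Node_right[OF _ t(2) \<open>\<not> root_case T S b\<close>] T(1) r(3) by simp
  moreover have "(Node l c T, S, b) \<in> Xset"
    using t(1,2) r(2) \<open>lab T = lab r\<close> T by (simp add: Xset_def smirnov_def)
  ultimately show ?thesis by blast
qed

lemma two_le_nnodes_iff: "2 \<le> nnodes t \<longleftrightarrow> t \<noteq> Leaf \<and> (left_sub t \<noteq> Leaf \<or> right_sub t \<noteq> Leaf)"
  by (cases t) (auto simp: Suc_le_eq)

lemma phi_psi:
  assumes "smirnov t" "2 \<le> nnodes t"
  shows "\<exists>T S b. psi t = (T, S, b) \<and> (T, S, b) \<in> Xset \<and> phi T S b = t"
  using assms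
proof (induction t)
  case Leaf
  then show ?case by (simp add: smirnov_def)
next
  case (Node l c r)
  consider "r = Leaf" | "r \<noteq> Leaf" "lab l = Some c" "right_sub l = Leaf"
    | "r \<noteq> Leaf" "lab l = Some c" "right_sub l \<noteq> Leaf"
    | "r \<noteq> Leaf" "lab l \<noteq> Some c" "right_sub r = Leaf"
    | "r \<noteq> Leaf" "lab l \<noteq> Some c" "right_sub r \<noteq> Leaf"
    by blast
  then show ?case
  proof cases
    case 1
    with Node.prems(2) have "l \<noteq> Leaf" by (auto simp: two_le_nnodes_iff)
    with 1 Node.prems(1) show ?thesis by (simp add: phi_psi_Node_Leaf)
  next
    case 2
    then obtain l' where "l = Node l' c Leaf"
      by (cases l) auto
    with 2 Node.prems(1) show ?thesis by (simp add: phi_psi_Node_left_Leaf)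
  next
    case 3
    then have "smirnov l" "2 \<le> nnodes l"
      using Node.prems(1) by (auto simp: smirnov_def two_le_nnodes_iff)
    then obtain T S b where "psi l = (T, S, b)" "(T, S, b) \<in> Xset" "phi T S b = l"
      using Node.IH(1) by blast
    from phi_psi_Node_left[OF Node.prems(1) 3 this] show ?thesis by blast
  next
    case 4
    then obtain y x where "r = Node y x Leaf"
      by (cases r) auto
    with 4 Node.prems(1) show ?thesis by (simp add: phi_psi_Node_right_Leaf)
  next
    case 5
    then have "smirnov r" "2 \<le> nnodes r"
      using Node.prems(1) by (auto simp: smirnov_def two_le_nnodes_iff)
    then obtain T S b where "psi r = (T, S, b)" "(T, S, b) \<in> Xset" "phi T S b = r"
      using Node.IH(2) by blast
    from phi_psi_Node_right[OF Node.prems(1) 5(2,3) this] show ?thesis by blast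
  qed
qed

section \<open>Agreement with the positional definition\<close>

definition delta_op :: "nat \<Rightarrow> nat \<Rightarrow> nat \<Rightarrow> tree \<Rightarrow> tree" where
  "delta_op a b d =
     (if d \<noteq> b then (\<lambda>t. case t of Leaf \<Rightarrow> Leaf | Node l x r \<Rightarrow> Node l x (Node r b Leaf))
      else if a < b then (\<lambda>t. case t of Leaf \<Rightarrow> Leaf | Node l x r \<Rightarrow> Node (Node l b Leaf) x r)
      else (\<lambda>t. case t of Leaf \<Rightarrow> Leaf | Node l x r \<Rightarrow> Node r x (Node l b Leaf)))"

definition delta_pos :: "nat \<Rightarrow> tree \<Rightarrow> dir list" where
  "delta_pos b T = last (path_positions (beyond (principal_label T) b) T)"

lemma phi_delta_case_eq_modat:
  "delta_case T S b \<Longrightarrow> phi T S b =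
     modat (delta_op (principal_label T) b (rootlab (sub T (delta_pos b T)))) (delta_pos b T)
       (graft (second_tree S) T)"
proof (induction rule: delta_case_induct)
  case (left l c r)
  then have "path_positions (beyond (principal_label l) b) l \<noteq> []"
    by (auto simp: path_positions_eq_Nil_iff delta_case_def root_case_def)
  with left show ?case
    by (simp add: phi_Node_left delta_case_def delta_pos_def path_positions_Node last_map)
next
  case (here l c r)
  then have "path_positions (beyond (principal_label r) b) r = []"
    by (simp add: path_positions_eq_Nil_iff root_case_def)
  with here show ?case
    by (simp add: phi_Node_delta delta_pos_def path_positions_Node delta_op_def)
next
  case (right l c r)
  then have "path_positions (beyond (principal_label r) b) r \<noteq> []"
    by (auto simp: path_positions_eq_Nil_iff delta_case_def root_case_def)
  with right show ?case
    by (simp add: phi_Node_right delta_case_def delta_pos_def path_positions_Node last_map)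
qed

lemma pmax_less_iff: "t \<noteq> Leaf \<Longrightarrow> pmax t < b \<longleftrightarrow> (\<forall>x\<in>set (path_labels t). x < b)"
  by (simp add: pmax_def)

lemma le_pmax_iff: "t \<noteq> Leaf \<Longrightarrow> b \<le> pmax t \<longleftrightarrow> (\<exists>x\<in>set (path_labels t). b \<le> x)"
  by (simp add: pmax_def Max_ge_iff)

lemma pmin_greater_iff: "t \<noteq> Leaf \<Longrightarrow> b < pmin t \<longleftrightarrow> (\<forall>x\<in>set (path_labels t). b < x)"
  by (simp add: pmin_def)

lemma pmin_le_iff: "t \<noteq> Leaf \<Longrightarrow> pmin t \<le> b \<longleftrightarrow> (\<exists>x\<in>set (path_labels t). x \<le> b)"
  by (simp add: pmin_def Min_le_iff)

lemma Phi_eq_Some_phi: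
  assumes "(T, S, b) \<in> Xset"
  shows "Phi T S b = Some (phi T S b)"
proof -
  have T: "T \<noteq> Leaf" and ab: "principal_label T \<noteq> b" and S: "S \<noteq> Tr Leaf"
    using assms by (auto simp: Xset_def smirnov_def)
  consider "principal_label T < b" | "b < principal_label T"
    using ab by linarith
  note sides = this
  from ab show ?thesis
  proof (cases rule: phi_cases[where S = S])
    case alpha
    from sides show ?thesis
      by cases (use alpha in \<open>cases S; auto simp: Phi_def Let_def alpha_case_def beyond_if_less
          beyond_if_greater modat_alpha_pos_eq_graft phi_alpha_case\<close>)+
  next
    case root
    from sides show ?thesis
      by cases (use root T S in \<open>cases S; auto simp: Phi_def Let_def root_case_def alpha_case_def
          beyond_if_less beyond_if_greater modat_alpha_pos_eq_graft phi_root_case pmax_less_iff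
          pmin_greater_iff\<close>)+
  next
    case delta
    let ?a = "principal_label T" and ?p = "delta_pos b T"
    have "path_positions (beyond ?a b) T \<noteq> []"
      using delta by (auto simp: path_positions_eq_Nil_iff delta_case_def root_case_def)
    then have d: "beyond ?a b (rootlab (sub T ?p))"
      by (auto simp: delta_pos_def path_positions_def dest: last_in_set)
    have ex: "\<exists>x\<in>set (path_labels T). beyond ?a b x" and nalpha: "\<not> alpha_case S ?a b"
      using delta by (auto simp: delta_case_def root_case_def)
    have cands:
      "filter (\<lambda>p. if ?a < b then b \<le> rootlab (sub T p) else rootlab (sub T p) \<le> b) (ppath T)
       = path_positions (beyond ?a b) T"
      by (simp add: path_positions_def beyond_def)
    have "Phi T S b =
      Some (modat (delta_op ?a b (rootlab (sub T ?p))) ?p (graft (second_tree S) T))"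
      unfolding Phi_def Let_def cands delta_pos_def[symmetric] modat_alpha_pos_eq_graft
      using sides
      by cases (use T S d ex nalpha \<open>path_positions (beyond ?a b) T \<noteq> []\<close> in
          \<open>cases S; auto simp: alpha_case_def beyond_if_less beyond_if_greater pmax_less_iff
          pmin_greater_iff le_pmax_iff pmin_le_iff delta_op_def\<close>)+
    with delta show ?thesis
      by (simp add: phi_delta_case_eq_modat)
  qed
qed

theorem theorem1:
  shows "(\<forall>(T, S, b) \<in> Xset. Phi T S b \<noteq> None)
    \<and> bij_betw (\<lambda>(T, S, b). the (Phi T S b)) Xset {t. smirnov t \<and> nnodes t \<ge> 2}
    \<and> (\<forall>(T, S, b) \<in> Xset. wt (the (Phi T S b)) = wtriple (T, S, b))
    \<and> (\<forall>(T, S, b) \<in> Xset. principal_label (the (Phi T S b)) = b)"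
proof -
  let ?Y = "{t. smirnov t \<and> nnodes t \<ge> 2}"
  have into: "phi T S b \<in> ?Y" and label: "principal_label (phi T S b) = b"
    if "(T, S, b) \<in> Xset" for T S b
    using that smirnov_phi two_le_nnodes_phi principal_label_phi
    by (auto simp: Xset_def smirnov_def)
  have "bij_betw (\<lambda>(T, S, b). phi T S b) Xset ?Y"
  proof (rule bij_betw_byWitness[where f' = psi])
    show "\<forall>x\<in>Xset. psi ((\<lambda>(T, S, b). phi T S b) x) = x"
      using psi_phi by auto
    show "(\<lambda>(T, S, b). phi T S b) ` Xset \<subseteq> ?Y"
      using into by auto
    show "\<forall>t\<in>?Y. (\<lambda>(T, S, b). phi T S b) (psi t) = t" "psi ` ?Y \<subseteq> Xset"
      using phi_psi by force+
  qed
  then have "bij_betw (\<lambda>(T, S, b). the (Phi T S b)) Xset ?Y"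
    by (rule bij_betw_cong[THEN iffD1, rotated]) (auto simp: Phi_eq_Some_phi)
  with Phi_eq_Some_phi wt_phi label show ?thesis
    by auto
qed

end
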